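(* For every sufficiently large $n\in\mathbb{N}$ there exists a function $g:\mathbb{R}\to[-1,+1]$ such that (i) $g(z)=1$ for all $z\ge c$, where $c=\Phi^{-1}(1-3^{-2n}/4)$; and (ii) $\mathbb{E}_{z\sim\mathcal{N}_1}[g(z)z^k]=0$ for all $k\in\{1,\dots,n\}$.
   Context: $\Phi$ is the CDF of the standard one-dimensional Gaussian $\mathcal{N}_1$. *)

theory Defs
  imports "HOL-Probability.Probability"
begin

definition std_normal :: "real measure" where
  "std_normal = density lborel std_normal_density"

definition Phi :: "real \<Rightarrow> real" where
  "Phi = cdf std_normal"

text \<open>Inverse of Phi (Phi is a strictly increasing bijection onto (0,1)).\<close>
definition Phi_inv :: "real \<Rightarrow> real" where
  "Phi_inv p = (THE x. Phi x = p)"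

end

theory Submission
  imports Defs "HOL-Real_Asymp.Real_Asymp"
begin

text \<open>Let \<open>c = Phi_inv (1 - 9 ^ (-n) / 4)\<close>; then \<open>c \<ge> 2 * sqrt n\<close> for large \<open>n\<close>.
  For a polynomial \<open>p\<close> of degree at most \<open>n\<close>, Lagrange extrapolation expresses \<open>p z\<close> through the
  shifted values \<open>p (z - t\<^sub>i)\<close> at nodes \<open>t\<^sub>i \<in> [c/2, 3c/2]\<close>. Moving the Gaussian along each
  shift bounds the part of \<open>E |p|\<close> coming from \<open>z \<ge> c\<close> by \<open>K * E |p|\<close>, where \<open>K < 1/2\<close> for
  large \<open>n\<close>. Consequently the convex functional
  \<open>a \<mapsto> E (1{z < c} * sqrt (1 + p\<^sub>a z ^ 2) - 1{z \<ge> c} * p\<^sub>a z)\<close>, where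
  \<open>p\<^sub>a z = a\<^sub>1 z + \<dots> + a\<^sub>n z\<^sup>n\<close>, is coercive and has a minimiser \<open>a\<close>. Its first-order
  conditions say that \<open>g = 1\<close> on \<open>[c, \<infinity>)\<close>, \<open>g = - p\<^sub>a / sqrt (1 + p\<^sub>a ^ 2)\<close> below \<open>c\<close>
  satisfies \<open>E (g z\<^sup>k) = 0\<close> for \<open>k = 1..n\<close>.\<close>

section \<open>Lagrange extrapolation\<close>

lemma lagrange_interpolation:
  fixes p :: "'a::field poly" and t :: "nat \<Rightarrow> 'a"
  assumes inj: "inj_on t {..n}" and deg: "degree p \<le> n"
  shows "poly p x = (\<Sum>i\<le>n. poly p (t i) * (\<Prod>j\<in>{..n}-{i}. (x - t j) / (t i - t j)))"
proof -
  define L where "L i = (\<Prod>j\<in>{..n}-{i}. smult (1 / (t i - t j)) [:- t j, 1:])" for i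
  define q where "q = (\<Sum>i\<le>n. smult (poly p (t i)) (L i))"
  have poly_L: "poly (L i) x = (\<Prod>j\<in>{..n}-{i}. (x - t j) / (t i - t j))" for i x
    unfolding L_def by (simp add: poly_prod diff_divide_distrib)
  have degree_L: "degree (L i) \<le> n" if "i \<le> n" for i
  proof -
    have "degree (L i) \<le> sum (degree \<circ> (\<lambda>j. smult (1 / (t i - t j)) [:- t j, 1:])) ({..n}-{i})"
      unfolding L_def by (rule degree_prod_sum_le) simp
    also have "\<dots> \<le> (\<Sum>j\<in>{..n}-{i}. 1)"
      by (intro sum_mono) (simp add: le_trans[OF degree_smult_le])
    also have "\<dots> = n" using that by simp
    finally show ?thesis .
  qed
  have poly_L_node: "poly (L i) (t k) = (if i = k then 1 else 0)" if "i \<le> n" "k \<le> n" for i k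
  proof (cases "i = k")
    case True
    have "poly (L i) (t k) = (\<Prod>j\<in>{..n}-{i}. 1)"
      unfolding poly_L using True inj that by (intro prod.cong refl) (auto simp: inj_on_def)
    then show ?thesis using True by simp
  next
    case False
    have "poly (L i) (t k) = 0"
      unfolding poly_L using False that by (intro prod_zero) auto
    then show ?thesis using False by simp
  qed
  have "p = q"
  proof (rule poly_eqI_degree[where A = "t ` {..n}"])
    have "poly q (t k) = poly p (t k)" if "k \<le> n" for k
      unfolding q_def poly_sum using that by (simp add: poly_L_node if_distrib cong: if_cong)
    then show "\<And>x. x \<in> t ` {..n} \<Longrightarrow> poly p x = poly q x" by auto
    have "degree q \<le> n"
      unfolding q_def by (intro degree_sum_le) (auto intro: le_trans[OF degree_smult_le] degree_L)
    moreover have "card (t ` {..n}) = Suc n" using card_image[OF inj] by simp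
    ultimately show "degree p < card (t ` {..n})" "degree q < card (t ` {..n})" using deg by auto
  qed
  then have "poly p x = poly q x" by simp
  also have "\<dots> = (\<Sum>i\<le>n. poly p (t i) * (\<Prod>j\<in>{..n}-{i}. (x - t j) / (t i - t j)))"
    by (simp add: q_def poly_sum poly_L)
  finally show ?thesis .
qed

lemma poly_extrapolation_from_shifts:
  fixes p :: "'a::field poly" and t :: "nat \<Rightarrow> 'a"
  assumes "inj_on t {..n}" and "degree p \<le> n"
  shows "poly p z = (\<Sum>i\<le>n. poly p (z - t i) * (\<Prod>j\<in>{..n}-{i}. t j / (t j - t i)))"
proof -
  define q where "q = pcompose p [:z, -1:]"
  have "degree q \<le> n" using assms(2) by (simp add: q_def degree_pcompose)
  from lagrange_interpolation[OF assms(1) this, of 0]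
  have "poly q 0 = (\<Sum>i\<le>n. poly q (t i) * (\<Prod>j\<in>{..n}-{i}. (0 - t j) / (t i - t j)))" .
  moreover have "(0 - b) / (a - b) = b / (b - a)" for a b :: 'a
    by (metis diff_0 divide_minus_left divide_minus_right minus_diff_eq)
  ultimately show ?thesis by (simp add: q_def poly_pcompose)
qed

section \<open>Extrapolation weights at equally spaced nodes\<close>

lemma prod_abs_diff_eq_fact:
  assumes "i \<le> n"
  shows "(\<Prod>j\<in>{..n}-{i}. \<bar>real j - real i\<bar>) = fact i * fact (n - i)"
  using assms
proof (induction n rule: dec_induct)
  case base
  have "{..i}-{i} = {..<i}" by auto
  then have "(\<Prod>j\<in>{..i}-{i}. \<bar>real j - real i\<bar>) = (\<Prod>j\<in>{0..<i}. real (i - j))"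
    by (auto simp: lessThan_atLeast0 of_nat_diff intro!: prod.cong)
  also have "\<dots> = fact i" by (simp add: fact_prod_rev)
  finally show ?case by simp
next
  case (step k)
  have "{..Suc k}-{i} = insert (Suc k) ({..k}-{i})" using step by auto
  then have "(\<Prod>j\<in>{..Suc k}-{i}. \<bar>real j - real i\<bar>)
      = real (Suc k - i) * (\<Prod>j\<in>{..k}-{i}. \<bar>real j - real i\<bar>)"
    using step by (simp add: of_nat_diff)
  also have "\<dots> = fact i * fact (Suc k - i)"
    using step by (simp add: Suc_diff_le)
  finally show ?case .
qed

lemma prod_add_eq_fact_div: "(\<Prod>j=1..n. real m + real j) = fact (m + n) / fact m"
proof (induction n)
  case (Suc n)
  have "(\<Prod>j=1..Suc n. real m + real j) = (real m + real (Suc n)) * (fact (m + n) / fact m)"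
    using Suc by (simp add: prod.nat_ivl_Suc')
  also have "\<dots> = fact (m + Suc n) / fact m"
    by (simp add: algebra_simps)
  finally show ?case .
qed simp

lemma prod_add_remove_le:
  assumes "0 < r" "i \<le> n"
  shows "(\<Prod>j\<in>{..n}-{i}. r + real j) \<le> (\<Prod>j=1..n. r + real j)"
proof -
  have "(r + real i) * (\<Prod>j\<in>{..n}-{i}. r + real j) = (\<Prod>j\<le>n. r + real j)"
    using assms(2) by (subst prod.remove[of "{..n}" i]) auto
  also have "\<dots> = r * (\<Prod>j=1..n. r + real j)"
    by (simp add: atMost_atLeast0 prod.atLeast_Suc_atMost)
  finally have eq: "(r + real i) * (\<Prod>j\<in>{..n}-{i}. r + real j) = r * (\<Prod>j=1..n. r + real j)" .
  have "r * (\<Prod>j\<in>{..n}-{i}. r + real j) \<le> (r + real i) * (\<Prod>j\<in>{..n}-{i}. r + real j)"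
    using assms(1) by (intro mult_right_mono prod_nonneg) auto
  then show ?thesis unfolding eq using assms(1) by simp
qed

text \<open>For nodes \<open>t\<^sub>j = s * (r + j)\<close> these are the weights
  \<open>t\<^sub>j / (t\<^sub>j - t\<^sub>i)\<close> of \<open>poly_extrapolation_from_shifts\<close>.\<close>

definition extrap_weight :: "real \<Rightarrow> nat \<Rightarrow> nat \<Rightarrow> real" where
  "extrap_weight r n i = (\<Prod>j\<in>{..n}-{i}. (r + real j) / (real j - real i))"

lemma abs_extrap_weight_le:
  assumes r: "0 < r" "r \<le> real m" and i: "i \<le> n"
  shows "\<bar>extrap_weight r n i\<bar> \<le> real (n choose i) * real ((m + n) choose n)"
proof -
  have "\<bar>extrap_weight r n i\<bar> = (\<Prod>j\<in>{..n}-{i}. r + real j) / (fact i * fact (n - i))"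
    using r i by (simp add: extrap_weight_def abs_prod prod_dividef prod_abs_diff_eq_fact)
  also have "\<dots> \<le> (\<Prod>j=1..n. real m + real j) / (fact i * fact (n - i))"
    using r i by (intro divide_right_mono order_trans[OF prod_add_remove_le prod_mono]) auto
  also have "\<dots> = fact (m + n) / fact m / (fact i * fact (n - i))"
    by (simp only: prod_add_eq_fact_div)
  also have "\<dots> = real (n choose i) * real ((m + n) choose n)"
    using i by (simp add: binomial_fact field_simps)
  finally show ?thesis .
qed

definition shift_node :: "real \<Rightarrow> nat \<Rightarrow> nat \<Rightarrow> real" where
  "shift_node c n i = c / 2 + real i * c / real n"

lemma inj_on_shift_node: "c \<noteq> 0 \<Longrightarrow> inj_on (shift_node c n) {..n}"
  by (cases "n = 0") (auto simp: inj_on_def shift_node_def field_simps)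

lemma shift_node_weight_eq:
  assumes "c \<noteq> 0" "0 < n"
  shows "(\<Prod>j\<in>{..n}-{i}. shift_node c n j / (shift_node c n j - shift_node c n i))
    = extrap_weight (real n / 2) n i"
  unfolding extrap_weight_def
proof (intro prod.cong refl)
  fix j assume "j \<in> {..n}-{i}"
  then have "real j \<noteq> real i" by auto
  then show "shift_node c n j / (shift_node c n j - shift_node c n i) = (real n / 2 + real j) / (real j - real i)"
    using assms by (simp add: shift_node_def field_simps)
qed

definition tail_const :: "real \<Rightarrow> nat \<Rightarrow> real" where
  "tail_const c n = (\<Sum>i\<le>n. \<bar>extrap_weight (real n / 2) n i\<bar> *
     exp (- shift_node c n i * c + (shift_node c n i)\<^sup>2 / 2))"

lemma exp_shift_node_le:
  fixes c :: real
  assumes n: "0 < n" and i: "i \<le> n"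
  defines "l \<equiv> c\<^sup>2 / (4 * real n)"
  shows "exp (- shift_node c n i * c + (shift_node c n i)\<^sup>2 / 2)
    \<le> exp (- c\<^sup>2 / 2) * (exp (- l / 2) ^ i * exp (l / 2) ^ (n - i) + exp (l / 2) ^ i * exp (- l / 2) ^ (n - i))"
proof -
  define t where "t = shift_node c n i"
  define x where "x = real n / 2 - real i"
  have ct: "c - t = c / real n * x" using n by (simp add: t_def shift_node_def x_def field_simps)
  have "real i \<le> real n" using i by simp
  then have "\<bar>x\<bar> \<le> real n / 2" unfolding x_def abs_le_iff by linarith
  then have x2: "x\<^sup>2 \<le> \<bar>x\<bar> * (real n / 2)"
    by (metis abs_ge_zero abs_mult_self_eq mult_left_mono power2_eq_square)
  have "(c - t)\<^sup>2 / 2 = c\<^sup>2 / real n ^ 2 * x\<^sup>2 / 2" by (simp add: ct power_mult_distrib power_divide)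
  also have "\<dots> \<le> c\<^sup>2 / real n ^ 2 * (\<bar>x\<bar> * (real n / 2)) / 2"
    using x2 by (intro divide_right_mono mult_left_mono) auto
  also have "\<dots> = l * \<bar>x\<bar>" using n by (simp add: l_def power2_eq_square field_simps)
  finally have quad: "(c - t)\<^sup>2 / 2 \<le> l * \<bar>x\<bar>" .
  have "exp (- t * c + t\<^sup>2 / 2) = exp (- c\<^sup>2 / 2) * exp ((c - t)\<^sup>2 / 2)"
    by (simp add: exp_add[symmetric] power2_eq_square algebra_simps)
  also have "\<dots> \<le> exp (- c\<^sup>2 / 2) * exp (l * \<bar>x\<bar>)" using quad by simp
  also have "exp (l * \<bar>x\<bar>) \<le> exp (l * x) + exp (- (l * x))"
    by (cases "x \<ge> 0") (auto simp: add_increasing add_increasing2)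
  also have "exp (l * x) = exp (- l / 2) ^ i * exp (l / 2) ^ (n - i)"
    using i by (simp add: x_def exp_of_nat_mult[symmetric] exp_add[symmetric] of_nat_diff algebra_simps)
  also have "exp (- (l * x)) = exp (l / 2) ^ i * exp (- l / 2) ^ (n - i)"
    using i by (simp add: x_def exp_of_nat_mult[symmetric] exp_add[symmetric] of_nat_diff algebra_simps)
      (simp add: field_simps)
  finally show ?thesis unfolding t_def by simp
qed

lemma binomial_sum_exp_shift_node_le:
  fixes c :: real
  assumes n: "0 < n"
  defines "u \<equiv> exp (- c\<^sup>2 / (8 * real n))"
  shows "(\<Sum>i\<le>n. real (n choose i) * exp (- shift_node c n i * c + (shift_node c n i)\<^sup>2 / 2))
    \<le> 2 * (u ^ 3 + u ^ 5) ^ n"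
proof -
  define l where "l = c\<^sup>2 / (4 * real n)"
  have u0: "0 < u" by (simp add: u_def)
  have "l / 2 = c\<^sup>2 / (8 * real n)" by (simp add: l_def)
  then have exp_l: "exp (- l / 2) = u" "exp (l / 2) = 1 / u"
    by (simp_all add: u_def exp_minus inverse_eq_divide)
  have "exp (- c\<^sup>2 / 2) = exp (real (4 * n) * (- c\<^sup>2 / (8 * real n)))"
    using n by (simp add: field_simps)
  then have exp_c: "exp (- c\<^sup>2 / 2) = u ^ (4 * n)" by (simp only: u_def exp_of_nat_mult)
  have "(\<Sum>i\<le>n. real (n choose i) * exp (- shift_node c n i * c + (shift_node c n i)\<^sup>2 / 2))
      \<le> (\<Sum>i\<le>n. real (n choose i) * (u ^ (4 * n) * (u ^ i * (1 / u) ^ (n - i) + (1 / u) ^ i * u ^ (n - i))))"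
    using exp_shift_node_le[OF n, of _ c] unfolding l_def[symmetric] exp_l exp_c
    by (intro sum_mono mult_left_mono) simp_all
  also have "\<dots> = u ^ (4 * n) * ((\<Sum>i\<le>n. real (n choose i) * (u ^ i * (1 / u) ^ (n - i)))
      + (\<Sum>i\<le>n. real (n choose i) * ((1 / u) ^ i * u ^ (n - i))))"
    by (simp only: sum_distrib_left sum.distrib[symmetric] distrib_left mult.left_commute)
  also have "\<dots> = u ^ (4 * n) * ((u + 1 / u) ^ n + (1 / u + u) ^ n)"
    by (simp only: binomial_ring mult.assoc)
  also have "\<dots> = 2 * (u ^ 4 * (u + 1 / u)) ^ n"
    by (simp add: power_mult power_mult_distrib add.commute)
  also have "u ^ 4 * (u + 1 / u) = u ^ 3 + u ^ 5"
    using u0 by (simp add: field_simps eval_nat_numeral)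
  finally show ?thesis .
qed

lemma exp_minus_half_le: "exp (- (1 / 2 :: real)) \<le> 0.62"
proof -
  have "1 + 1 / 2 + (1 / 2)\<^sup>2 / 2 \<le> exp (1 / 2 :: real)"
    by (rule exp_lower_Taylor_quadratic) simp
  then have "1.625 \<le> exp (1 / 2 :: real)" by (simp add: power2_eq_square)
  then have "inverse (exp (1 / 2)) \<le> inverse (1.625 :: real)" by (intro le_imp_inverse_le) auto
  then show ?thesis by (simp add: exp_minus)
qed

lemma two_pow_half_le:
  assumes "2 * m \<le> n + 1"
  shows "2 ^ (m + 1) * 0.66 ^ n \<le> (3 * 0.94 ^ n :: real)"
proof -
  define s where "s = sqrt (2 :: real)"
  have "s \<le> sqrt (1.42\<^sup>2)" unfolding s_def by (intro real_sqrt_le_mono) (simp add: power2_eq_square)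
  then have s: "1 \<le> s" "s \<le> 1.42" "s\<^sup>2 = 2" by (simp_all add: s_def)
  have "(2 :: real) ^ m = s ^ (2 * m)" by (simp add: power_mult s)
  also have "\<dots> \<le> s ^ (n + 1)" using assms s by (intro power_increasing) auto
  finally have "2 ^ (m + 1) * 0.66 ^ n \<le> 2 * s ^ (n + 1) * 0.66 ^ n" by simp
  also have "\<dots> = 2 * s * (s * 0.66) ^ n" by (simp add: power_mult_distrib power_divide mult_ac)
  also have "\<dots> \<le> 3 * 0.94 ^ n" using s by (intro mult_mono power_mono) auto
  finally show ?thesis .
qed

text \<open>With \<open>u = exp (- c\<^sup>2 / (8 * n)) \<le> exp (- 1 / 2) \<le> 0.62\<close> one has
  \<open>2 * (u ^ 3 + u ^ 5) \<le> 0.66\<close>; the binomial factor \<open>2 ^ (n / 2)\<close> of the weights then leaves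
  \<open>sqrt 2 * 0.66 < 0.94\<close>.\<close>

lemma tail_const_le:
  assumes n: "0 < n" and c: "4 * real n \<le> c\<^sup>2"
  shows "tail_const c n \<le> 3 * 0.94 ^ n"
proof -
  define m where "m = n - n div 2"
  define u where "u = exp (- c\<^sup>2 / (8 * real n))"
  define w where "w i = exp (- shift_node c n i * c + (shift_node c n i)\<^sup>2 / 2)" for i
  have "tail_const c n \<le> (\<Sum>i\<le>n. real (n choose i) * real ((m + n) choose n) * w i)"
    unfolding tail_const_def w_def using n
    by (intro sum_mono mult_right_mono abs_extrap_weight_le) (auto simp: m_def)
  also have "\<dots> \<le> (\<Sum>i\<le>n. 2 ^ (m + n) * (real (n choose i) * w i))"
  proof (intro sum_mono)
    fix i
    have "real ((m + n) choose n) \<le> 2 ^ (m + n)"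
      by (metis binomial_le_pow2 of_nat_le_iff of_nat_numeral of_nat_power)
    then show "real (n choose i) * real ((m + n) choose n) * w i \<le> 2 ^ (m + n) * (real (n choose i) * w i)"
      by (simp add: w_def mult_ac mult_left_mono)
  qed
  also have "\<dots> \<le> 2 ^ (m + n) * (2 * (u ^ 3 + u ^ 5) ^ n)"
    unfolding sum_distrib_left[symmetric] w_def u_def
    by (intro mult_left_mono binomial_sum_exp_shift_node_le n) simp
  also have "\<dots> = 2 ^ (m + 1) * (2 * (u ^ 3 + u ^ 5)) ^ n"
    by (simp only: power_add power_mult_distrib power_one_right mult.assoc mult.commute mult.left_commute)
  also have "\<dots> \<le> 2 ^ (m + 1) * 0.66 ^ n"
  proof -
    have "u \<le> exp (- (1 / 2))" unfolding u_def using c n by (simp add: field_simps)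
    then have "u \<le> 0.62" using exp_minus_half_le by linarith
    then have "u ^ 3 \<le> 0.62 ^ 3" "u ^ 5 \<le> 0.62 ^ 5" by (intro power_mono; simp add: u_def)+
    then have "2 * (u ^ 3 + u ^ 5) \<le> 0.66" by (simp add: power_divide)
    then show ?thesis by (intro mult_left_mono power_mono) (auto simp: u_def)
  qed
  also have "\<dots> \<le> 3 * 0.94 ^ n" by (rule two_pow_half_le) (simp add: m_def)
  finally show ?thesis .
qed

section \<open>Gaussian tails of polynomials\<close>

abbreviation phi :: "real \<Rightarrow> real" where "phi \<equiv> std_normal_density"

lemma borel_measurable_poly [measurable]: "poly p \<in> borel_measurable (borel :: real measure)"
  by (intro borel_measurable_continuous_onI continuous_on_poly continuous_on_id)

lemma abs_power_le_one_plus: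
  assumes "k \<le> n"
  shows "\<bar>z :: real\<bar> ^ k \<le> 1 + \<bar>z\<bar> ^ n"
proof (cases "\<bar>z\<bar> \<le> 1")
  case True
  then have "\<bar>z\<bar> ^ k \<le> 1" by (simp add: power_le_one)
  then show ?thesis by (simp add: add_increasing2)
next
  case False
  then have "\<bar>z\<bar> ^ k \<le> \<bar>z\<bar> ^ n" using assms by (intro power_increasing) auto
  then show ?thesis by simp
qed

lemma integrable_phi_mult_poly_bounded:
  fixes g :: "real \<Rightarrow> real"
  assumes [measurable]: "g \<in> borel_measurable borel" and bound: "\<And>z. \<bar>g z\<bar> \<le> B * (1 + \<bar>z\<bar> ^ N)"
  shows "integrable lborel (\<lambda>z. phi z * g z)"
proof (rule Bochner_Integration.integrable_bound)
  show "integrable lborel (\<lambda>z. B * (phi z + phi z * \<bar>z\<bar> ^ N))"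
    by (intro Bochner_Integration.integrable_mult_right Bochner_Integration.integrable_add
        integrable_std_normal_moment_abs) simp
  show "AE z in lborel. norm (phi z * g z) \<le> norm (B * (phi z + phi z * \<bar>z\<bar> ^ N))"
  proof (intro AE_I2)
    fix z
    have "norm (phi z * g z) \<le> phi z * (B * (1 + \<bar>z\<bar> ^ N))"
      using bound[of z] by (simp add: abs_mult mult_left_mono)
    also have "\<dots> \<le> norm (B * (phi z + phi z * \<bar>z\<bar> ^ N))" by (simp add: algebra_simps)
    finally show "norm (phi z * g z) \<le> norm (B * (phi z + phi z * \<bar>z\<bar> ^ N))" .
  qed
qed simp

lemma abs_poly_le: "\<bar>poly p (z :: real)\<bar> \<le> (\<Sum>i\<le>degree p. \<bar>coeff p i\<bar>) * (1 + \<bar>z\<bar> ^ degree p)"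
proof -
  have "\<bar>poly p z\<bar> = \<bar>\<Sum>i\<le>degree p. coeff p i * z ^ i\<bar>" by (simp add: poly_altdef)
  also have "\<dots> \<le> (\<Sum>i\<le>degree p. \<bar>coeff p i\<bar> * \<bar>z\<bar> ^ i)"
    by (rule order_trans[OF sum_abs]) (simp add: abs_mult power_abs)
  also have "\<dots> \<le> (\<Sum>i\<le>degree p. \<bar>coeff p i\<bar> * (1 + \<bar>z\<bar> ^ degree p))"
    by (intro sum_mono mult_left_mono abs_power_le_one_plus) auto
  finally show ?thesis by (simp add: sum_distrib_right)
qed

lemma integrable_phi_abs_poly: "integrable lborel (\<lambda>z. phi z * \<bar>poly p z\<bar>)"
  by (rule integrable_phi_mult_poly_bounded[OF _ order_trans[OF _ abs_poly_le]]) auto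

text \<open>Completing the square: moving the Gaussian by \<open>t\<close> costs the factor
  \<open>exp (- t * z + t\<^sup>2 / 2) \<le> exp (- t * c + t\<^sup>2 / 2)\<close> on \<open>[c, \<infinity>)\<close>.\<close>

lemma phi_shift_tail_le:
  assumes t: "0 \<le> t"
  shows "phi (t + y) * indicator {c..} (t + y) \<le> exp (- t * c + t\<^sup>2 / 2) * phi y"
proof (cases "c \<le> t + y")
  case True
  have "phi (t + y) = phi y * exp (- t * y - t\<^sup>2 / 2)"
    by (simp add: std_normal_density_def mult.assoc exp_add[symmetric] power2_eq_square algebra_simps)
      (simp add: field_simps)
  moreover have "t * (c - t) \<le> t * y" using True t by (intro mult_left_mono) auto
  then have "exp (- t * y - t\<^sup>2 / 2) \<le> exp (- t * c + t\<^sup>2 / 2)"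
    by (simp add: power2_eq_square algebra_simps)
  ultimately show ?thesis using True normal_density_pos[of 1 0 y]
    by (simp add: mult.commute mult_left_mono)
next
  case False
  then show ?thesis by simp
qed

lemma
  fixes f :: "real \<Rightarrow> real"
  assumes t: "0 \<le> t" and f [measurable]: "f \<in> borel_measurable borel"
    and f_int: "integrable lborel (\<lambda>z. phi z * f z)" and f_nonneg: "\<And>z. 0 \<le> f z"
  shows integrable_shifted_tail: "integrable lborel (\<lambda>z. phi z * (indicator {c..} z * f (z - t)))"
    and integral_shifted_tail_le: "(\<integral>z. phi z * (indicator {c..} z * f (z - t)) \<partial>lborel)
      \<le> exp (- t * c + t\<^sup>2 / 2) * (\<integral>z. phi z * f z \<partial>lborel)"
proof -
  let ?g = "\<lambda>y. phi (t + y) * (indicator {c..} (t + y) * f y)"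
  let ?h = "\<lambda>y. exp (- t * c + t\<^sup>2 / 2) * (phi y * f y)"
  have h_int: "integrable lborel ?h" by (intro integrable_mult_right f_int)
  have g_le: "?g y \<le> ?h y" for y
    using mult_right_mono[OF phi_shift_tail_le[OF t] f_nonneg[of y]] by (simp add: mult_ac)
  have g_int: "integrable lborel ?g"
  proof (rule Bochner_Integration.integrable_bound[OF h_int])
    show "AE y in lborel. norm (?g y) \<le> norm (?h y)"
      using g_le f_nonneg by (intro AE_I2) (simp add: abs_mult)
  qed simp
  have shift: "(\<lambda>z. phi z * (indicator {c..} z * f (z - t))) = (\<lambda>z. ?g (z - t))" by simp
  show "integrable lborel (\<lambda>z. phi z * (indicator {c..} z * f (z - t)))"
    unfolding shift using lborel_integrable_real_affine[OF g_int, of 1 "- t"] by simp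
  have "(\<integral>z. phi z * (indicator {c..} z * f (z - t)) \<partial>lborel) = (\<integral>y. ?g y \<partial>lborel)"
    using lborel_integral_real_affine[of 1 "\<lambda>z. phi z * (indicator {c..} z * f (z - t))" t] by simp
  also have "\<dots> \<le> (\<integral>y. ?h y \<partial>lborel)" by (intro integral_mono g_int h_int g_le)
  finally show "(\<integral>z. phi z * (indicator {c..} z * f (z - t)) \<partial>lborel)
      \<le> exp (- t * c + t\<^sup>2 / 2) * (\<integral>z. phi z * f z \<partial>lborel)" by simp
qed

text \<open>Writing \<open>p z\<close> as a combination of the values \<open>p (z - t\<^sub>i)\<close> at the shifted nodes,
  each shifted tail integral is controlled by the full integral.\<close>

lemma poly_tail_integral_le:
  fixes p :: "real poly"
  assumes c: "0 < c" and n: "0 < n" and deg: "degree p \<le> n"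
  shows "(\<integral>z. phi z * (indicator {c..} z * \<bar>poly p z\<bar>) \<partial>lborel)
    \<le> tail_const c n * (\<integral>z. phi z * \<bar>poly p z\<bar> \<partial>lborel)"
proof -
  let ?t = "shift_node c n" and ?w = "extrap_weight (real n / 2) n"
  define f where "f i z = phi z * (indicator {c..} z * \<bar>poly p (z - ?t i)\<bar>)" for i z
  have t_nonneg: "0 \<le> ?t i" for i using c by (simp add: shift_node_def)
  have f_int: "integrable lborel (f i)" for i
    unfolding f_def by (intro integrable_shifted_tail t_nonneg integrable_phi_abs_poly) auto
  have "(\<integral>z. phi z * (indicator {c..} z * \<bar>poly p z\<bar>) \<partial>lborel) \<le> (\<integral>z. (\<Sum>i\<le>n. \<bar>?w i\<bar> * f i z) \<partial>lborel)"
  proof (rule integral_mono')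
    show "integrable lborel (\<lambda>z. \<Sum>i\<le>n. \<bar>?w i\<bar> * f i z)"
      by (intro Bochner_Integration.integrable_sum Bochner_Integration.integrable_mult_right f_int)
    fix z
    have "poly p z = (\<Sum>i\<le>n. poly p (z - ?t i) * ?w i)"
      using poly_extrapolation_from_shifts[OF inj_on_shift_node deg, of c z] c n
      by (simp add: shift_node_weight_eq)
    then have "\<bar>poly p z\<bar> \<le> (\<Sum>i\<le>n. \<bar>?w i\<bar> * \<bar>poly p (z - ?t i)\<bar>)"
      by (metis (no_types, lifting) abs_mult mult.commute sum.cong sum_abs)
    then have "phi z * indicator {c..} z * \<bar>poly p z\<bar>
        \<le> phi z * indicator {c..} z * (\<Sum>i\<le>n. \<bar>?w i\<bar> * \<bar>poly p (z - ?t i)\<bar>)"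
      by (intro mult_left_mono) auto
    then show "phi z * (indicator {c..} z * \<bar>poly p z\<bar>) \<le> (\<Sum>i\<le>n. \<bar>?w i\<bar> * f i z)"
      by (simp add: f_def sum_distrib_left mult_ac)
    show "0 \<le> (\<Sum>i\<le>n. \<bar>?w i\<bar> * f i z)" by (auto simp: f_def intro!: sum_nonneg)
  qed
  also have "\<dots> = (\<Sum>i\<le>n. \<bar>?w i\<bar> * (\<integral>z. f i z \<partial>lborel))"
    by (simp add: f_int)
  also have "\<dots> \<le> (\<Sum>i\<le>n. \<bar>?w i\<bar> * (exp (- ?t i * c + (?t i)\<^sup>2 / 2) * (\<integral>z. phi z * \<bar>poly p z\<bar> \<partial>lborel)))"
    unfolding f_def
    by (intro sum_mono mult_left_mono integral_shifted_tail_le t_nonneg integrable_phi_abs_poly) auto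
  also have "\<dots> = tail_const c n * (\<integral>z. phi z * \<bar>poly p z\<bar> \<partial>lborel)"
    by (simp add: tail_const_def sum_distrib_right mult.assoc)
  finally show ?thesis .
qed

section \<open>The standard normal distribution function\<close>

lemma sets_std_normal [simp]: "sets std_normal = sets borel"
  by (simp add: std_normal_def)

interpretation N1: real_distribution std_normal
proof (intro real_distribution.intro real_distribution_axioms.intro)
  show "prob_space std_normal" unfolding std_normal_def by (rule prob_space_normal_density) simp
qed simp

lemma
  fixes f :: "real \<Rightarrow> real"
  assumes [measurable]: "f \<in> borel_measurable borel"
  shows integrable_std_normal_iff: "integrable std_normal f \<longleftrightarrow> integrable lborel (\<lambda>z. phi z * f z)"
    and integral_std_normal: "(\<integral>z. f z \<partial>std_normal) = (\<integral>z. phi z * f z \<partial>lborel)"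
  unfolding std_normal_def by (simp_all add: integrable_density integral_density)

lemma integral_pos_of_pos_on:
  fixes f :: "'a \<Rightarrow> real"
  assumes f: "integrable M f" and nonneg: "\<And>z. 0 \<le> f z"
    and A: "A \<in> sets M" "emeasure M A \<noteq> 0" and pos: "\<And>z. z \<in> A \<Longrightarrow> 0 < f z"
  shows "0 < integral\<^sup>L M f"
proof (rule ccontr)
  assume "\<not> 0 < integral\<^sup>L M f"
  moreover have "0 \<le> integral\<^sup>L M f" using nonneg by (simp add: Bochner_Integration.integral_nonneg)
  ultimately have "integral\<^sup>L M f = 0" by simp
  then have "AE z in M. f z = 0" using integral_nonneg_eq_0_iff_AE[OF f] nonneg by simp
  then have "AE z in M. z \<notin> A" by (rule AE_mp) (use pos in force)
  then have "A \<in> null_sets M" using AE_iff_null_sets[OF A(1)] by simp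
  then show False using A(2) by (auto dest: null_setsD1)
qed

lemma integrable_phi_indicator:
  "A \<in> sets borel \<Longrightarrow> integrable lborel (\<lambda>z. phi z * indicator A z)"
  by (rule integrable_phi_mult_poly_bounded[where B = 1 and N = 0]) (auto simp: indicator_def)

lemma measure_std_normal: "A \<in> sets borel \<Longrightarrow> measure std_normal A = (\<integral>z. phi z * indicator A z \<partial>lborel)"
  by (simp add: integral_std_normal[symmetric])

lemma isCont_Phi: "isCont Phi x"
proof -
  have "measure std_normal {x} = (\<integral>z. phi z * indicator {x} z \<partial>lborel)"
    by (simp add: measure_std_normal)
  also have "\<dots> = (\<integral>z. phi x * indicator {x} z \<partial>lborel)"
    by (rule Bochner_Integration.integral_cong) (auto simp: indicator_def)
  finally show ?thesis unfolding Phi_def using N1.isCont_cdf by simp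
qed

lemma Phi_diff_eq: "x < y \<Longrightarrow> Phi y - Phi x = (\<integral>z. phi z * indicator {x<..y} z \<partial>lborel)"
  unfolding Phi_def by (simp add: N1.cdf_diff_eq measure_std_normal)

lemma Phi_less:
  assumes "x < y"
  shows "Phi x < Phi y"
proof -
  have "0 < (\<integral>z. phi z * indicator {x<..y} z \<partial>lborel)"
    using assms by (intro integral_pos_of_pos_on[where A = "{x<..y}"])
      (auto simp: normal_density_pos integrable_phi_indicator)
  then show ?thesis using Phi_diff_eq[OF assms] by simp
qed

lemma Phi_Phi_inv:
  assumes p: "0 < p" "p < 1"
  shows "Phi (Phi_inv p) = p"
proof -
  have "\<forall>\<^sub>F x in at_bot. Phi x < p"
    using N1.cdf_lim_at_bot p unfolding Phi_def by (intro order_tendstoD) auto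
  then obtain a where "\<forall>x\<le>a. Phi x < p" by (auto simp: eventually_at_bot_linorder)
  then have a: "Phi a \<le> p" by (simp add: less_imp_le)
  have "\<forall>\<^sub>F x in at_top. p < Phi x"
    using N1.cdf_lim_at_top_prob p unfolding Phi_def by (intro order_tendstoD) auto
  then obtain b' where "\<forall>x\<ge>b'. p < Phi x" by (auto simp: eventually_at_top_linorder)
  then have "p < Phi (max a b')" by simp
  then have b: "p \<le> Phi (max a b')" "a \<le> max a b'" by simp_all
  have "continuous_on {a..max a b'} Phi" by (intro continuous_at_imp_continuous_on ballI isCont_Phi)
  with IVT'[OF a b] obtain x where x: "Phi x = p" by blast
  have "inj Phi" by (intro strict_mono_imp_inj_on strict_monoI Phi_less)
  then have "Phi_inv p = x" unfolding Phi_inv_def using x by (auto dest: injD)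
  then show ?thesis using x by simp
qed

lemma one_minus_Phi_ge: "phi (\<bar>x\<bar> + 1) \<le> 1 - Phi x"
proof -
  have "(\<integral>z. phi (\<bar>x\<bar> + 1) * indicator {x<..x+1} z \<partial>lborel) \<le> (\<integral>z. phi z * indicator {x<..x+1} z \<partial>lborel)"
  proof (intro integral_mono integrable_phi_indicator)
    fix z
    show "phi (\<bar>x\<bar> + 1) * indicator {x<..x+1} z \<le> phi z * indicator {x<..x+1} z"
    proof (cases "z \<in> {x<..x+1}")
      case True
      then have "z\<^sup>2 \<le> (\<bar>x\<bar> + 1)\<^sup>2" by (intro power2_le_iff_abs_le[THEN iffD2]) auto
      then show ?thesis using True by (auto simp: std_normal_density_def intro!: divide_right_mono)
    qed simp
  qed (auto simp: integrable_real_indicator)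
  also have "\<dots> = Phi (x + 1) - Phi x" by (simp add: Phi_diff_eq)
  also have "Phi (x + 1) \<le> 1" unfolding Phi_def by (rule N1.cdf_bounded_prob)
  finally show ?thesis by simp
qed

lemma le_Phi_inv_one_minus:
  assumes e: "0 < e" "e < 1" "e \<le> phi (\<bar>x\<bar> + 1)"
  shows "x \<le> Phi_inv (1 - e)"
proof (rule ccontr)
  assume "\<not> x \<le> Phi_inv (1 - e)"
  then have "Phi (Phi_inv (1 - e)) < Phi x" by (intro Phi_less) simp
  then have "1 - e < Phi x" using e by (simp add: Phi_Phi_inv)
  then show False using one_minus_Phi_ge[of x] e(3) by simp
qed

lemma three_powi_eq: "(3::real) powi (- (2 * int n)) / 4 = 1 / (4 * 9 ^ n)"
proof -
  have "(3::real) powi (- (2 * int n)) = inverse (3 ^ (2 * n))"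
    by (simp add: power_int_minus power_int_of_nat[symmetric])
  also have "(3::real) ^ (2 * n) = 9 ^ n" by (simp add: power_mult)
  finally show ?thesis by (simp add: inverse_eq_divide)
qed

lemma phi_eq: "phi x = 1 / (sqrt (2 * pi) * exp (x\<^sup>2 / 2))"
  by (simp add: std_normal_density_def exp_minus field_simps)

text \<open>\<open>7.4\<close> bounds \<open>exp 2\<close>, so the hypothesis holds for all large \<open>n\<close>.\<close>

lemma inverse_nine_pow_le_phi:
  assumes "exp (2 * sqrt (real n) + 1 / 2) \<le> (9 / 7.4) ^ n"
  shows "1 / (4 * 9 ^ n) \<le> phi (2 * sqrt (real n) + 1)"
proof -
  have "exp (2 :: real) = exp 1 * exp 1" by (simp add: exp_add[symmetric])
  also have "\<dots> \<le> 2.72 * 2.72" using e_less_272 by (intro mult_mono) auto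
  finally have "exp (2 :: real) \<le> 7.4" by simp
  have "(2 * sqrt (real n) + 1)\<^sup>2 / 2 = real n * 2 + (2 * sqrt (real n) + 1 / 2)"
    by (simp add: power2_eq_square algebra_simps)
  then have "exp ((2 * sqrt (real n) + 1)\<^sup>2 / 2) = exp 2 ^ n * exp (2 * sqrt (real n) + 1 / 2)"
    by (simp only: exp_add exp_of_nat_mult)
  also have "\<dots> \<le> 7.4 ^ n * (9 / 7.4) ^ n"
    using \<open>exp 2 \<le> 7.4\<close> assms by (intro mult_mono power_mono) auto
  also have "\<dots> = 9 ^ n" by (simp add: power_mult_distrib[symmetric])
  finally have "exp ((2 * sqrt (real n) + 1)\<^sup>2 / 2) \<le> 9 ^ n" .
  moreover have "sqrt (2 * pi) \<le> 4"
    using pi_less_4 real_sqrt_le_mono[of "2 * pi" "4\<^sup>2"] by simp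
  ultimately have "sqrt (2 * pi) * exp ((2 * sqrt (real n) + 1)\<^sup>2 / 2) \<le> 4 * 9 ^ n"
    by (intro mult_mono) auto
  then show ?thesis unfolding phi_eq by (intro divide_left_mono) auto
qed

lemma Phi_inv_threshold_ge:
  "\<forall>\<^sub>F n in sequentially. 2 * sqrt (real n) \<le> Phi_inv (1 - 3 powi (- (2 * int n)) / 4)"
proof -
  have "\<forall>\<^sub>F n in sequentially. exp (2 * sqrt (real n) + 1 / 2) \<le> (9 / 7.4) ^ n"
    by real_asymp
  then show ?thesis
  proof eventually_elim
    case (elim n)
    have "1 \<le> (9::real) ^ n" by (rule one_le_power) simp
    then have "1 < 4 * (9::real) ^ n" by linarith
    then show ?case
      using le_Phi_inv_one_minus[of "1 / (4 * 9 ^ n)" "2 * sqrt (real n)"] inverse_nine_pow_le_phi[OF elim]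
      by (simp add: three_powi_eq)
  qed
qed

section \<open>A smooth absolute value\<close>

definition soft_abs :: "real \<Rightarrow> real" where
  "soft_abs x = sqrt (1 + x\<^sup>2)"

definition soft_sgn :: "real \<Rightarrow> real" where
  "soft_sgn x = x / sqrt (1 + x\<^sup>2)"

lemma borel_measurable_soft_abs [measurable]: "soft_abs \<in> borel_measurable borel"
  unfolding soft_abs_def[abs_def] by measurable

lemma borel_measurable_soft_sgn [measurable]: "soft_sgn \<in> borel_measurable borel"
  unfolding soft_sgn_def[abs_def] by measurable

lemma soft_abs_pos: "0 < soft_abs x"
  by (simp add: soft_abs_def add_pos_nonneg)

lemma abs_le_soft_abs: "\<bar>x\<bar> \<le> soft_abs x"
  using real_sqrt_le_mono[of "x\<^sup>2" "1 + x\<^sup>2"] by (simp add: soft_abs_def)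

lemma soft_abs_le: "soft_abs x \<le> 1 + \<bar>x\<bar>"
proof -
  have "1 + x\<^sup>2 \<le> (1 + \<bar>x\<bar>)\<^sup>2" by (simp add: power2_eq_square algebra_simps)
  then have "sqrt (1 + x\<^sup>2) \<le> sqrt ((1 + \<bar>x\<bar>)\<^sup>2)" by (rule real_sqrt_le_mono)
  then show ?thesis by (simp add: soft_abs_def)
qed

lemma soft_abs_lipschitz: "\<bar>soft_abs x - soft_abs y\<bar> \<le> \<bar>x - y\<bar>"
proof -
  have "soft_abs x = norm ((1::real), x)" for x by (simp add: soft_abs_def norm_Pair)
  then have "\<bar>soft_abs x - soft_abs y\<bar> \<le> norm ((1::real, x) - (1, y))" by (metis norm_triangle_ineq3)
  then show ?thesis by (simp add: norm_Pair)
qed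

lemma abs_soft_sgn_le: "\<bar>soft_sgn x\<bar> \<le> 1"
  using abs_le_soft_abs[of x] soft_abs_pos[of x] by (simp add: soft_sgn_def soft_abs_def[symmetric] abs_divide)

text \<open>Second-order Taylor bound: \<open>soft_sgn\<close> is the derivative of \<open>soft_abs\<close>, whose
  second derivative is at most \<open>1\<close>.\<close>

lemma soft_abs_add_le: "soft_abs (x + y) \<le> soft_abs x + soft_sgn x * y + y\<^sup>2 / 2"
proof -
  define s where "s = soft_abs x"
  have s: "1 \<le> s" "s\<^sup>2 = 1 + x\<^sup>2" by (simp_all add: s_def soft_abs_def add_nonneg_nonneg)
  define w where "w = x * y / s + y\<^sup>2 / 2"
  have rhs: "soft_abs x + soft_sgn x * y + y\<^sup>2 / 2 = s + w"
    by (simp add: s_def w_def soft_abs_def soft_sgn_def)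
  have sw: "s * w = x * y + s * y\<^sup>2 / 2" using s by (simp add: w_def field_simps)
  have "(s + w)\<^sup>2 = 1 + (x + y)\<^sup>2 + ((s - 1) * y\<^sup>2 + w\<^sup>2)"
    using s sw by (simp add: power2_eq_square algebra_simps)
  moreover have "0 \<le> (s - 1) * y\<^sup>2 + w\<^sup>2" using s by simp
  ultimately have le: "1 + (x + y)\<^sup>2 \<le> (s + w)\<^sup>2" by linarith
  have "1 + (x + y / 2)\<^sup>2 + y\<^sup>2 / 4 \<le> s * (s + w)"
    using s sw mult_right_mono[OF s(1), of "y\<^sup>2"] by (simp add: power2_eq_square algebra_simps)
  moreover have "0 \<le> 1 + (x + y / 2)\<^sup>2 + y\<^sup>2 / 4" by (intro add_nonneg_nonneg) auto
  ultimately have "0 \<le> s * (s + w)" by linarith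
  then have "0 \<le> s + w" using s by (simp add: zero_le_mult_iff)
  then have "soft_abs (x + y) \<le> s + w" using real_sqrt_le_mono[OF le] by (simp add: soft_abs_def)
  then show ?thesis using rhs by simp
qed

section \<open>Functionals of polynomials with vanishing constant term\<close>

text \<open>Coefficient vectors are functions \<open>nat \<Rightarrow> real\<close> with the product topology; only
  the coordinates \<open>1..n\<close> enter \<open>moment_poly n a\<close>.\<close>

definition moment_poly :: "nat \<Rightarrow> (nat \<Rightarrow> real) \<Rightarrow> real \<Rightarrow> real" where
  "moment_poly n a z = (\<Sum>k=1..n. a k * z ^ k)"

lemma moment_poly_eq_poly: "moment_poly n a z = poly (\<Sum>k=1..n. monom (a k) k) z"
  by (simp add: moment_poly_def poly_sum poly_monom)

lemma degree_moment_poly_le: "degree (\<Sum>k=1..n. monom (a k) k) \<le> n"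
  by (intro degree_sum_le) (auto intro: le_trans[OF degree_monom_le])

lemma borel_measurable_moment_poly [measurable]: "moment_poly n a \<in> borel_measurable borel"
  unfolding moment_poly_def[abs_def] by measurable

lemma abs_moment_poly_le: "\<bar>moment_poly n a z\<bar> \<le> (\<Sum>k=1..n. \<bar>a k\<bar>) * (1 + \<bar>z\<bar> ^ n)"
proof -
  have "\<bar>moment_poly n a z\<bar> \<le> (\<Sum>k=1..n. \<bar>a k\<bar> * \<bar>z\<bar> ^ k)"
    unfolding moment_poly_def by (rule order_trans[OF sum_abs]) (simp add: abs_mult power_abs)
  also have "\<dots> \<le> (\<Sum>k=1..n. \<bar>a k\<bar> * (1 + \<bar>z\<bar> ^ n))"
    by (intro sum_mono mult_left_mono abs_power_le_one_plus) auto
  finally show ?thesis by (simp add: sum_distrib_right)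
qed

lemma moment_poly_cong: "(\<And>k. k \<in> {1..n} \<Longrightarrow> a k = b k) \<Longrightarrow> moment_poly n a = moment_poly n b"
  unfolding moment_poly_def by (intro ext sum.cong) auto

lemma moment_poly_scale: "moment_poly n (\<lambda>k. s * a k) z = s * moment_poly n a z"
  unfolding moment_poly_def by (simp add: sum_distrib_left mult_ac)

lemma moment_poly_update:
  assumes "k \<in> {1..n}"
  shows "moment_poly n (a(k := a k + t)) z = moment_poly n a z + t * z ^ k"
proof -
  have "moment_poly n (a(k := a k + t)) z = (\<Sum>j=1..n. a j * z ^ j + (if j = k then t * z ^ k else 0))"
    unfolding moment_poly_def by (intro sum.cong) (auto simp: algebra_simps)
  also have "\<dots> = moment_poly n a z + t * z ^ k" using assms by (simp add: sum.distrib moment_poly_def)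
  finally show ?thesis .
qed

lemma integrable_moment_functional:
  fixes h :: "real \<Rightarrow> real \<Rightarrow> real"
  assumes "(\<lambda>z. h z (moment_poly n a z)) \<in> borel_measurable borel" and bound: "\<And>z x. \<bar>h z x\<bar> \<le> 1 + \<bar>x\<bar>"
  shows "integrable lborel (\<lambda>z. phi z * h z (moment_poly n a z))"
proof (rule integrable_phi_mult_poly_bounded[OF assms(1)])
  fix z
  have "\<bar>h z (moment_poly n a z)\<bar> \<le> 1 + (\<Sum>k=1..n. \<bar>a k\<bar>) * (1 + \<bar>z\<bar> ^ n)"
    using bound[of z] abs_moment_poly_le[of n a z] by (meson add_left_mono order_trans)
  also have "\<dots> \<le> (1 + (\<Sum>k=1..n. \<bar>a k\<bar>)) * (1 + \<bar>z\<bar> ^ n)" by (simp add: algebra_simps)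
  finally show "\<bar>h z (moment_poly n a z)\<bar> \<le> (1 + (\<Sum>k=1..n. \<bar>a k\<bar>)) * (1 + \<bar>z\<bar> ^ n)" .
qed

lemma moment_functional_lipschitz:
  fixes h :: "real \<Rightarrow> real \<Rightarrow> real"
  assumes lip: "\<And>z x y. \<bar>h z x - h z y\<bar> \<le> \<bar>x - y\<bar>" and bound: "\<And>z x. \<bar>h z x\<bar> \<le> 1 + \<bar>x\<bar>"
    and meas: "\<And>a. (\<lambda>z. h z (moment_poly n a z)) \<in> borel_measurable borel"
  shows "\<bar>(\<integral>z. phi z * h z (moment_poly n a z) \<partial>lborel) - (\<integral>z. phi z * h z (moment_poly n b z) \<partial>lborel)\<bar>
    \<le> (\<Sum>k=1..n. \<bar>a k - b k\<bar> * (\<integral>z. phi z * \<bar>z\<bar> ^ k \<partial>lborel))"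
proof -
  have int: "integrable lborel (\<lambda>z. phi z * h z (moment_poly n a z))" for a
    by (intro integrable_moment_functional meas bound)
  have int_moments: "integrable lborel (\<lambda>z. \<Sum>k=1..n. \<bar>a k - b k\<bar> * (phi z * \<bar>z\<bar> ^ k))"
    by (intro Bochner_Integration.integrable_sum Bochner_Integration.integrable_mult_right
        integrable_std_normal_moment_abs)
  have "\<bar>phi z * h z (moment_poly n a z) - phi z * h z (moment_poly n b z)\<bar>
      \<le> (\<Sum>k=1..n. \<bar>a k - b k\<bar> * (phi z * \<bar>z\<bar> ^ k))" for z
  proof -
    have "\<bar>h z (moment_poly n a z) - h z (moment_poly n b z)\<bar> \<le> \<bar>moment_poly n a z - moment_poly n b z\<bar>"
      by (rule lip)
    also have "\<dots> \<le> (\<Sum>k=1..n. \<bar>a k - b k\<bar> * \<bar>z\<bar> ^ k)"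
      unfolding moment_poly_def sum_subtractf[symmetric] left_diff_distrib[symmetric]
      by (rule order_trans[OF sum_abs]) (simp add: abs_mult power_abs)
    finally have "phi z * \<bar>h z (moment_poly n a z) - h z (moment_poly n b z)\<bar>
        \<le> phi z * (\<Sum>k=1..n. \<bar>a k - b k\<bar> * \<bar>z\<bar> ^ k)"
      by (intro mult_left_mono) auto
    then show ?thesis by (simp add: right_diff_distrib[symmetric] abs_mult sum_distrib_left mult_ac)
  qed
  then have "\<bar>(\<integral>z. phi z * h z (moment_poly n a z) - phi z * h z (moment_poly n b z) \<partial>lborel)\<bar>
      \<le> (\<integral>z. (\<Sum>k=1..n. \<bar>a k - b k\<bar> * (phi z * \<bar>z\<bar> ^ k)) \<partial>lborel)"
    using int by (intro integral_abs_bound_integral int_moments) auto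
  also have "\<dots> = (\<Sum>k=1..n. \<bar>a k - b k\<bar> * (\<integral>z. phi z * \<bar>z\<bar> ^ k \<partial>lborel))"
    by (subst Bochner_Integration.integral_sum)
      (auto intro!: Bochner_Integration.integrable_mult_right integrable_std_normal_moment_abs)
  finally show ?thesis using int by simp
qed

lemma continuous_on_moment_functional:
  fixes h :: "real \<Rightarrow> real \<Rightarrow> real"
  assumes lip: "\<And>z x y. \<bar>h z x - h z y\<bar> \<le> \<bar>x - y\<bar>" and bound: "\<And>z x. \<bar>h z x\<bar> \<le> 1 + \<bar>x\<bar>"
    and meas: "\<And>a. (\<lambda>z. h z (moment_poly n a z)) \<in> borel_measurable borel"
  shows "continuous_on S (\<lambda>a. \<integral>z. phi z * h z (moment_poly n a z) \<partial>lborel)"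
proof (rule continuous_on_sequentiallyI)
  fix u :: "nat \<Rightarrow> nat \<Rightarrow> real" and a
  assume u: "u \<longlonglongrightarrow> a"
  have "(\<lambda>j. u j k) \<longlonglongrightarrow> a k" for k
  proof -
    have "\<forall>x\<in>UNIV. isCont (\<lambda>x :: nat \<Rightarrow> real. x k) x"
      by (rule continuous_on_eq_continuous_at[THEN iffD1, OF open_UNIV continuous_on_product_coordinates])
    then have "isCont (\<lambda>x :: nat \<Rightarrow> real. x k) a" by blast
    from isCont_tendsto_compose[OF this u] show ?thesis .
  qed
  then have "(\<lambda>j. \<Sum>k=1..n. \<bar>u j k - a k\<bar> * (\<integral>z. phi z * \<bar>z\<bar> ^ k \<partial>lborel))
      \<longlonglongrightarrow> (\<Sum>k=1..n. \<bar>a k - a k\<bar> * (\<integral>z. phi z * \<bar>z\<bar> ^ k \<partial>lborel))"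
    by (intro tendsto_intros)
  then have lim: "(\<lambda>j. \<Sum>k=1..n. \<bar>u j k - a k\<bar> * (\<integral>z. phi z * \<bar>z\<bar> ^ k \<partial>lborel)) \<longlonglongrightarrow> 0"
    by simp
  have "(\<lambda>j. (\<integral>z. phi z * h z (moment_poly n (u j) z) \<partial>lborel) - (\<integral>z. phi z * h z (moment_poly n a z) \<partial>lborel))
      \<longlonglongrightarrow> 0"
  proof (rule Lim_null_comparison[OF always_eventually lim], rule allI)
    show "norm ((\<integral>z. phi z * h z (moment_poly n (u j) z) \<partial>lborel) - (\<integral>z. phi z * h z (moment_poly n a z) \<partial>lborel))
        \<le> (\<Sum>k=1..n. \<bar>u j k - a k\<bar> * (\<integral>z. phi z * \<bar>z\<bar> ^ k \<partial>lborel))" for j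
      using moment_functional_lipschitz[OF lip bound meas, of "u j" a] by (simp only: real_norm_def)
  qed
  then show "(\<lambda>j. \<integral>z. phi z * h z (moment_poly n (u j) z) \<partial>lborel) \<longlonglongrightarrow> (\<integral>z. phi z * h z (moment_poly n a z) \<partial>lborel)"
    by (simp add: LIM_zero_iff)
qed

definition coeff_box :: "nat \<Rightarrow> real \<Rightarrow> (nat \<Rightarrow> real) set" where
  "coeff_box n R = PiE UNIV (\<lambda>k. if k \<in> {1..n} then {-R..R} else {0})"

lemma mem_coeff_box: "a \<in> coeff_box n R \<longleftrightarrow> (\<forall>k. if k \<in> {1..n} then \<bar>a k\<bar> \<le> R else a k = 0)"
  unfolding coeff_box_def by (auto simp: PiE_iff abs_le_iff split: if_splits)

lemma compact_coeff_box: "compact (coeff_box n R)"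
proof -
  have "compactin (product_topology (\<lambda>i. euclidean) UNIV) (coeff_box n R)"
    unfolding coeff_box_def compactin_PiE by auto
  then show ?thesis by (simp add: euclidean_product_topology)
qed

lemma continuous_coercive_attains_min:
  fixes F :: "(nat \<Rightarrow> real) \<Rightarrow> real"
  assumes cont: "continuous_on UNIV F"
    and local: "\<And>a b. (\<And>k. k \<in> {1..n} \<Longrightarrow> a k = b k) \<Longrightarrow> F a = F b"
    and D: "0 < D" and coercive: "\<And>a. D * (\<Sum>k=1..n. \<bar>a k\<bar>) \<le> F a"
  shows "\<exists>a0. \<forall>a. F a0 \<le> F a"
proof -
  define R where "R = \<bar>F (\<lambda>_. 0)\<bar> / D"
  have zero_in: "(\<lambda>_. 0) \<in> coeff_box n R" using D by (simp add: mem_coeff_box R_def)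
  obtain a0 where a0_min: "\<And>b. b \<in> coeff_box n R \<Longrightarrow> F a0 \<le> F b"
    using continuous_attains_inf[OF compact_coeff_box _ continuous_on_subset[OF cont]] zero_in by blast
  have "F a0 \<le> F a" for a
  proof -
    define a' where "a' k = (if k \<in> {1..n} then a k else 0)" for k
    have "F a = F a'" by (rule local) (simp add: a'_def)
    show ?thesis
    proof (cases "a' \<in> coeff_box n R")
      case True
      then show ?thesis using a0_min \<open>F a = F a'\<close> by simp
    next
      case False
      then obtain k where k: "k \<in> {1..n}" "R < \<bar>a k\<bar>"
        unfolding mem_coeff_box a'_def by (auto split: if_splits)
      have "\<bar>F (\<lambda>_. 0)\<bar> = D * R" using D by (simp add: R_def)
      also have "\<dots> < D * \<bar>a k\<bar>" using k D by simp
      also have "\<dots> \<le> D * (\<Sum>k=1..n. \<bar>a k\<bar>)" using k D by (intro mult_left_mono member_le_sum) auto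
      also have "\<dots> \<le> F a" by (rule coercive)
      finally show ?thesis using a0_min[OF zero_in] by simp
    qed
  qed
  then show ?thesis by blast
qed

lemma continuous_homogeneous_ge_l1:
  fixes F :: "(nat \<Rightarrow> real) \<Rightarrow> real"
  assumes cont: "continuous_on UNIV F"
    and local: "\<And>a b. (\<And>k. k \<in> {1..n} \<Longrightarrow> a k = b k) \<Longrightarrow> F a = F b"
    and homogeneous: "\<And>s a. 0 < s \<Longrightarrow> F (\<lambda>k. s * a k) = s * F a"
    and pos: "\<And>a k. k \<in> {1..n} \<Longrightarrow> a k \<noteq> 0 \<Longrightarrow> 0 < F a"
  shows "\<exists>\<delta>>0. \<forall>a. \<delta> * (\<Sum>k=1..n. \<bar>a k\<bar>) \<le> F a"
proof -
  define S where "S = coeff_box n 1 \<inter> {a. (\<Sum>k=1..n. \<bar>a k\<bar>) = 1}"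
  have "\<exists>\<delta>>0. \<forall>b\<in>S. \<delta> \<le> F b"
  proof (cases "S = {}")
    case False
    have "closed {a :: nat \<Rightarrow> real. (\<Sum>k=1..n. \<bar>a k\<bar>) = 1}"
      by (intro closed_Collect_eq continuous_intros continuous_on_product_coordinates)
    then have "compact S" unfolding S_def by (intro compact_Int_closed compact_coeff_box)
    then obtain b where b: "b \<in> S" and b_min: "\<And>a. a \<in> S \<Longrightarrow> F b \<le> F a"
      using continuous_attains_inf[OF _ False continuous_on_subset[OF cont]] by blast
    have "\<exists>k\<in>{1..n}. b k \<noteq> 0"
    proof (rule ccontr)
      assume "\<not> (\<exists>k\<in>{1..n}. b k \<noteq> 0)"
      then have "(\<Sum>k=1..n. \<bar>b k\<bar>) = 0" by simp
      then show False using b by (simp add: S_def)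
    qed
    then show ?thesis using pos b_min by blast
  qed (auto intro!: exI[of _ 1])
  then obtain \<delta> where \<delta>: "0 < \<delta>" "\<And>b. b \<in> S \<Longrightarrow> \<delta> \<le> F b" by blast
  have "\<delta> * (\<Sum>k=1..n. \<bar>a k\<bar>) \<le> F a" for a
  proof -
    define N where "N = (\<Sum>k=1..n. \<bar>a k\<bar>)"
    show ?thesis
    proof (cases "N = 0")
      case True
      then have "a k = 0" if "k \<in> {1..n}" for k
        using that sum_nonneg_eq_0_iff[of "{1..n}" "\<lambda>k. \<bar>a k\<bar>"] by (simp add: N_def)
      then have "F a = F (\<lambda>k. 2 * 0)" by (intro local) simp
      moreover have "F (\<lambda>k. 2 * 0) = 0" using homogeneous[of 2 "\<lambda>k. 0"] by simp
      ultimately show ?thesis using True by (simp add: N_def)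
    next
      case False
      then have N: "0 < N" by (simp add: N_def sum_nonneg order_le_neq_trans)
      define b where "b k = (if k \<in> {1..n} then a k / N else 0)" for k
      have "\<bar>a k\<bar> \<le> N" if "k \<in> {1..n}" for k unfolding N_def using that by (intro member_le_sum) auto
      then have "b \<in> coeff_box n 1" using N by (auto simp: mem_coeff_box b_def abs_divide)
      moreover have "(\<Sum>k=1..n. \<bar>b k\<bar>) = (\<Sum>k=1..n. \<bar>a k\<bar> / N)"
        using N by (intro sum.cong) (auto simp: b_def abs_divide)
      then have "(\<Sum>k=1..n. \<bar>b k\<bar>) = 1"
        using N unfolding N_def[symmetric] sum_divide_distrib[symmetric] by simp
      ultimately have "\<delta> \<le> F b" by (intro \<delta>) (simp add: S_def)
      moreover have "F a = F (\<lambda>k. N * b k)" by (rule local) (use N in \<open>simp add: b_def\<close>)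
      then have "F a = N * F b" using homogeneous[OF N] by simp
      ultimately show ?thesis using N by (simp add: N_def)
    qed
  qed
  then show ?thesis using \<delta>(1) by blast
qed

lemma integral_phi_abs_moment_poly_pos:
  assumes "k \<in> {1..n}" "a k \<noteq> 0"
  shows "0 < (\<integral>z. phi z * \<bar>moment_poly n a z\<bar> \<partial>lborel)"
proof -
  define p where "p = (\<Sum>k=1..n. monom (a k) k)"
  have "coeff p k = a k" using assms(1) by (simp add: p_def coeff_sum)
  then have "p \<noteq> 0" using assms(2) by auto
  then have null: "{z. poly p z = 0} \<in> null_sets lborel"
    by (intro finite_imp_null_set_lborel poly_roots_finite)
  have "emeasure lborel ({0<..1} - {z. poly p z = 0}) = emeasure lborel {0<..1::real}"
    by (rule emeasure_Diff_null_set[OF null]) simp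
  then show ?thesis
    using null normal_density_pos
    by (intro integral_pos_of_pos_on[where A = "{0<..1} - {z. poly p z = 0}"])
      (auto simp: moment_poly_eq_poly p_def integrable_phi_abs_poly)
qed

lemma moment_norm_ge_l1: "\<exists>\<delta>>0. \<forall>a. \<delta> * (\<Sum>k=1..n. \<bar>a k\<bar>) \<le> (\<integral>z. phi z * \<bar>moment_poly n a z\<bar> \<partial>lborel)"
proof (rule continuous_homogeneous_ge_l1)
  show "continuous_on UNIV (\<lambda>a. \<integral>z. phi z * \<bar>moment_poly n a z\<bar> \<partial>lborel)"
    by (rule continuous_on_moment_functional[where h = "\<lambda>z x. \<bar>x\<bar>"]) auto
  show "(\<integral>z. phi z * \<bar>moment_poly n (\<lambda>k. s * a k) z\<bar> \<partial>lborel) = s * (\<integral>z. phi z * \<bar>moment_poly n a z\<bar> \<partial>lborel)"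
    if "0 < s" for s a
    using that by (simp add: moment_poly_scale abs_mult mult.left_commute)
  show "(\<integral>z. phi z * \<bar>moment_poly n a z\<bar> \<partial>lborel) = (\<integral>z. phi z * \<bar>moment_poly n b z\<bar> \<partial>lborel)"
    if "\<And>k. k \<in> {1..n} \<Longrightarrow> a k = b k" for a b
    using moment_poly_cong[of n a b, OF that] by simp
  show "0 < (\<integral>z. phi z * \<bar>moment_poly n a z\<bar> \<partial>lborel)" if "k \<in> {1..n}" "a k \<noteq> 0" for a k
    using that by (rule integral_phi_abs_moment_poly_pos)
qed

section \<open>The variational problem\<close>

definition moment_objective :: "real \<Rightarrow> nat \<Rightarrow> (nat \<Rightarrow> real) \<Rightarrow> real" where
  "moment_objective c n a = (\<integral>z. phi z *
     (indicator {..<c} z * soft_abs (moment_poly n a z) - indicator {c..} z * moment_poly n a z) \<partial>lborel)"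

definition moment_objective_deriv :: "real \<Rightarrow> nat \<Rightarrow> (nat \<Rightarrow> real) \<Rightarrow> nat \<Rightarrow> real" where
  "moment_objective_deriv c n a k = (\<integral>z. phi z *
     (indicator {..<c} z * soft_sgn (moment_poly n a z) * z ^ k - indicator {c..} z * z ^ k) \<partial>lborel)"

lemma integrable_moment_objective:
  "integrable lborel (\<lambda>z. phi z *
     (indicator {..<c} z * soft_abs (moment_poly n a z) - indicator {c..} z * moment_poly n a z))"
proof (rule integrable_moment_functional[where h = "\<lambda>z x. indicator {..<c} z * soft_abs x - indicator {c..} z * x"])
  fix z x :: real
  show "\<bar>indicator {..<c} z * soft_abs x - indicator {c..} z * x\<bar> \<le> 1 + \<bar>x\<bar>"
    using soft_abs_le[of x] soft_abs_pos[of x] by (auto simp: indicator_def)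
qed measurable

lemma integrable_moment_objective_deriv:
  "integrable lborel (\<lambda>z. phi z *
     (indicator {..<c} z * soft_sgn (moment_poly n a z) * z ^ k - indicator {c..} z * z ^ k))"
proof (rule integrable_phi_mult_poly_bounded[where B = 1 and N = k])
  fix z :: real
  have "\<bar>soft_sgn (moment_poly n a z) * z ^ k\<bar> \<le> \<bar>z\<bar> ^ k"
    using mult_right_mono[OF abs_soft_sgn_le, of "\<bar>z\<bar> ^ k"] by (simp add: abs_mult power_abs)
  then show "\<bar>indicator {..<c} z * soft_sgn (moment_poly n a z) * z ^ k - indicator {c..} z * z ^ k\<bar>
      \<le> 1 * (1 + \<bar>z\<bar> ^ k)"
    by (auto simp: indicator_def power_abs)
qed measurable

lemma continuous_on_moment_objective: "continuous_on S (moment_objective c n)"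
  unfolding moment_objective_def
proof (rule continuous_on_moment_functional[where h = "\<lambda>z x. indicator {..<c} z * soft_abs x - indicator {c..} z * x"])
  fix z x y :: real
  show "\<bar>(indicator {..<c} z * soft_abs x - indicator {c..} z * x) - (indicator {..<c} z * soft_abs y - indicator {c..} z * y)\<bar>
      \<le> \<bar>x - y\<bar>"
    using soft_abs_lipschitz[of x y] by (auto simp: indicator_def)
  show "\<bar>indicator {..<c} z * soft_abs x - indicator {c..} z * x\<bar> \<le> 1 + \<bar>x\<bar>"
    using soft_abs_le[of x] soft_abs_pos[of x] by (auto simp: indicator_def)
qed measurable

lemma moment_objective_cong:
  assumes "\<And>k. k \<in> {1..n} \<Longrightarrow> a k = b k"
  shows "moment_objective c n a = moment_objective c n b"
  by (simp only: moment_objective_def moment_poly_cong[OF assms])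

lemma moment_objective_ge:
  assumes tail: "(\<integral>z. phi z * (indicator {c..} z * \<bar>moment_poly n a z\<bar>) \<partial>lborel)
    \<le> K * (\<integral>z. phi z * \<bar>moment_poly n a z\<bar> \<partial>lborel)"
  shows "(1 - 2 * K) * (\<integral>z. phi z * \<bar>moment_poly n a z\<bar> \<partial>lborel) \<le> moment_objective c n a"
proof -
  let ?P = "moment_poly n a"
  have int_abs: "integrable lborel (\<lambda>z. phi z * \<bar>?P z\<bar>)"
    by (simp add: moment_poly_eq_poly integrable_phi_abs_poly)
  have int_tail: "integrable lborel (\<lambda>z. phi z * (indicator {c..} z * \<bar>?P z\<bar>))"
    by (rule integrable_moment_functional[where h = "\<lambda>z x. indicator {c..} z * \<bar>x\<bar>"])
      (auto simp: indicator_def)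
  have "(1 - 2 * K) * (\<integral>z. phi z * \<bar>?P z\<bar> \<partial>lborel)
      \<le> (\<integral>z. phi z * \<bar>?P z\<bar> \<partial>lborel) - 2 * (\<integral>z. phi z * (indicator {c..} z * \<bar>?P z\<bar>) \<partial>lborel)"
    using tail by (simp add: algebra_simps)
  also have "\<dots> = (\<integral>z. phi z * \<bar>?P z\<bar> - 2 * (phi z * (indicator {c..} z * \<bar>?P z\<bar>)) \<partial>lborel)"
    using int_abs int_tail by simp
  also have "\<dots> \<le> moment_objective c n a"
    unfolding moment_objective_def
  proof (intro integral_mono integrable_moment_objective)
    show "integrable lborel (\<lambda>z. phi z * \<bar>?P z\<bar> - 2 * (phi z * (indicator {c..} z * \<bar>?P z\<bar>)))"
      using int_abs int_tail by simp
    fix z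
    have "\<bar>?P z\<bar> - 2 * (indicator {c..} z * \<bar>?P z\<bar>)
        \<le> indicator {..<c} z * soft_abs (?P z) - indicator {c..} z * ?P z"
      using abs_le_soft_abs[of "?P z"] by (auto simp: indicator_def)
    from mult_left_mono[OF this, of "phi z"]
    show "phi z * \<bar>?P z\<bar> - 2 * (phi z * (indicator {c..} z * \<bar>?P z\<bar>))
        \<le> phi z * (indicator {..<c} z * soft_abs (?P z) - indicator {c..} z * ?P z)"
      by (simp add: algebra_simps)
  qed
  finally show ?thesis .
qed

lemma moment_objective_update_le:
  assumes k: "k \<in> {1..n}"
  shows "moment_objective c n (a(k := a k + t))
    \<le> moment_objective c n a + t * moment_objective_deriv c n a k + t\<^sup>2 * (\<integral>z. phi z * ((z ^ k)\<^sup>2 / 2) \<partial>lborel)"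
proof -
  let ?P = "moment_poly n a"
  define F where "F z = indicator {..<c} z * soft_abs (?P z) - indicator {c..} z * ?P z" for z
  define G where "G z = indicator {..<c} z * soft_sgn (?P z) * z ^ k - indicator {c..} z * z ^ k" for z
  have int_F: "integrable lborel (\<lambda>z. phi z * F z)"
    unfolding F_def by (rule integrable_moment_objective)
  have int_G: "integrable lborel (\<lambda>z. t * (phi z * G z))"
    unfolding G_def by (intro integrable_mult_right integrable_moment_objective_deriv)
  have int_Q: "integrable lborel (\<lambda>z. t\<^sup>2 * (phi z * ((z ^ k)\<^sup>2 / 2)))"
    by (intro integrable_mult_right integrable_phi_mult_poly_bounded[where B = 1 and N = "2 * k"])
      (auto simp: power_abs power_mult[symmetric] mult.commute)
  have pointwise: "indicator {..<c} z * soft_abs (?P z + t * z ^ k) - indicator {c..} z * (?P z + t * z ^ k)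
      \<le> F z + t * G z + t\<^sup>2 * ((z ^ k)\<^sup>2 / 2)" for z
    using soft_abs_add_le[of "?P z" "t * z ^ k"]
    by (cases "z < c") (auto simp: F_def G_def indicator_def power_mult_distrib algebra_simps)
  have "moment_objective c n (a(k := a k + t))
      \<le> (\<integral>z. phi z * F z + t * (phi z * G z) + t\<^sup>2 * (phi z * ((z ^ k)\<^sup>2 / 2)) \<partial>lborel)"
    unfolding moment_objective_def moment_poly_update[OF k]
  proof (intro integral_mono)
    show "integrable lborel (\<lambda>z. phi z * F z + t * (phi z * G z) + t\<^sup>2 * (phi z * ((z ^ k)\<^sup>2 / 2)))"
      using int_F int_G int_Q by simp
    show "phi z * (indicator {..<c} z * soft_abs (?P z + t * z ^ k) - indicator {c..} z * (?P z + t * z ^ k))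
        \<le> phi z * F z + t * (phi z * G z) + t\<^sup>2 * (phi z * ((z ^ k)\<^sup>2 / 2))" for z
      using mult_left_mono[OF pointwise, of "phi z" z] by (simp add: algebra_simps)
  qed (use integrable_moment_objective[of c n "a(k := a k + t)"] in \<open>simp add: moment_poly_update[OF k]\<close>)
  also have "\<dots> = moment_objective c n a + t * moment_objective_deriv c n a k
      + t\<^sup>2 * (\<integral>z. phi z * ((z ^ k)\<^sup>2 / 2) \<partial>lborel)"
    using int_F int_G int_Q
    by (simp add: moment_objective_def moment_objective_deriv_def F_def G_def)
  finally show ?thesis .
qed

lemma linear_quadratic_nonneg_imp_zero:
  fixes D Q :: real
  assumes nonneg: "\<And>t. 0 \<le> t * D + t\<^sup>2 * Q"
  shows "D = 0"
proof -
  define u where "u = 1 / (\<bar>Q\<bar> + 1)"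
  have u: "0 < u" "u * Q < 1"
    unfolding u_def by (auto simp: field_simps abs_if split: if_splits)
  have "0 \<le> (- D * u) * D + (- D * u)\<^sup>2 * Q" by (rule nonneg)
  also have "\<dots> = D\<^sup>2 * u * (u * Q - 1)" by (simp add: power2_eq_square algebra_simps)
  finally have nonneg_at_u: "0 \<le> D\<^sup>2 * (u * (u * Q - 1))" by (simp add: mult.assoc)
  show ?thesis
  proof (rule ccontr)
    assume "D \<noteq> 0"
    then have "D\<^sup>2 * (u * (u * Q - 1)) < 0" using u by (intro mult_pos_neg) auto
    then show False using nonneg_at_u by linarith
  qed
qed

lemma moment_objective_deriv_eq_0:
  assumes min: "\<And>b. moment_objective c n a \<le> moment_objective c n b" and k: "k \<in> {1..n}"
  shows "moment_objective_deriv c n a k = 0"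
proof (rule linear_quadratic_nonneg_imp_zero)
  show "0 \<le> t * moment_objective_deriv c n a k + t\<^sup>2 * (\<integral>z. phi z * ((z ^ k)\<^sup>2 / 2) \<partial>lborel)" for t
    using min[of "a(k := a k + t)"] moment_objective_update_le[OF k, of c a t] by linarith
qed

lemma exists_moment_vanishing:
  assumes tail: "\<And>a. (\<integral>z. phi z * (indicator {c..} z * \<bar>moment_poly n a z\<bar>) \<partial>lborel)
      \<le> K * (\<integral>z. phi z * \<bar>moment_poly n a z\<bar> \<partial>lborel)"
    and K: "K < 1 / 2"
  shows "\<exists>g. g \<in> borel_measurable borel \<and> (\<forall>z. -1 \<le> g z \<and> g z \<le> 1) \<and> (\<forall>z. c \<le> z \<longrightarrow> g z = 1) \<and>
    (\<forall>k\<in>{1..n}. integrable std_normal (\<lambda>z. g z * z ^ k) \<and> (\<integral>z. g z * z ^ k \<partial>std_normal) = 0)"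
proof -
  obtain \<delta> where \<delta>: "0 < \<delta>" "\<And>a. \<delta> * (\<Sum>k=1..n. \<bar>a k\<bar>) \<le> (\<integral>z. phi z * \<bar>moment_poly n a z\<bar> \<partial>lborel)"
    using moment_norm_ge_l1 by blast
  have D: "0 < (1 - 2 * K) * \<delta>" using K \<delta>(1) by simp
  have "(1 - 2 * K) * \<delta> * (\<Sum>k=1..n. \<bar>a k\<bar>) \<le> moment_objective c n a" for a
  proof -
    have "(1 - 2 * K) * \<delta> * (\<Sum>k=1..n. \<bar>a k\<bar>) \<le> (1 - 2 * K) * (\<integral>z. phi z * \<bar>moment_poly n a z\<bar> \<partial>lborel)"
      using mult_left_mono[OF \<delta>(2)[of a]] K by (simp add: mult.assoc)
    also have "\<dots> \<le> moment_objective c n a" by (rule moment_objective_ge[OF tail])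
    finally show ?thesis .
  qed
  then obtain a where min: "\<And>b. moment_objective c n a \<le> moment_objective c n b"
    using continuous_coercive_attains_min[OF continuous_on_moment_objective moment_objective_cong D] by blast
  define g where "g z = (if c \<le> z then 1 else - soft_sgn (moment_poly n a z))" for z
  have g_meas [measurable]: "g \<in> borel_measurable borel" unfolding g_def by measurable
  have g_bounds: "-1 \<le> g z \<and> g z \<le> 1" for z
    using abs_soft_sgn_le[of "moment_poly n a z"] by (auto simp: g_def abs_le_iff)
  have g_top: "c \<le> z \<longrightarrow> g z = 1" for z by (simp add: g_def)
  have g_moments: "integrable std_normal (\<lambda>z. g z * z ^ k) \<and> (\<integral>z. g z * z ^ k \<partial>std_normal) = 0"
    if k: "k \<in> {1..n}" for k
  proof -
    have eq: "phi z * (g z * z ^ k) = - (phi z *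
        (indicator {..<c} z * soft_sgn (moment_poly n a z) * z ^ k - indicator {c..} z * z ^ k))" for z
      by (simp add: g_def indicator_def)
    have meas: "(\<lambda>z. g z * z ^ k) \<in> borel_measurable borel" by measurable
    show ?thesis
      unfolding integrable_std_normal_iff[OF meas] integral_std_normal[OF meas] eq
      using integrable_moment_objective_deriv moment_objective_deriv_eq_0[OF min k]
      by (simp add: moment_objective_deriv_def)
  qed
  show ?thesis using g_meas g_bounds g_top g_moments by blast
qed

theorem lemma3p3:
  shows "\<exists>N::nat. \<forall>n\<ge>N. \<exists>g :: real \<Rightarrow> real.
           g \<in> borel_measurable borel \<and>
           (\<forall>z. -1 \<le> g z \<and> g z \<le> 1) \<and>
           (\<forall>z. z \<ge> Phi_inv (1 - 3 powi (- (2 * int n)) / 4) \<longrightarrow> g z = 1) \<and>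
           (\<forall>k\<in>{1..n}. integrable std_normal (\<lambda>z. g z * z ^ k) \<and>
                        (\<integral>z. g z * z ^ k \<partial>std_normal) = 0)"
proof -
  have "\<forall>\<^sub>F n in sequentially. 3 * 0.94 ^ n < (1 / 2 :: real)" by real_asymp
  with Phi_inv_threshold_ge eventually_gt_at_top[of 0] show ?thesis
    unfolding eventually_sequentially[symmetric]
  proof eventually_elim
    case (elim n)
    define c where "c = Phi_inv (1 - 3 powi (- (2 * int n)) / 4)"
    have "1 \<le> sqrt (real n)" using elim by simp
    then have "0 < c" using elim unfolding c_def by linarith
    have "(2 * sqrt (real n))\<^sup>2 \<le> c\<^sup>2" using elim by (intro power_mono) (auto simp: c_def)
    then have "4 * real n \<le> c\<^sup>2" by (simp add: power_mult_distrib)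
    then have K: "tail_const c n < 1 / 2" using tail_const_le[of n c] elim by simp
    have "(\<integral>z. phi z * (indicator {c..} z * \<bar>moment_poly n a z\<bar>) \<partial>lborel)
        \<le> tail_const c n * (\<integral>z. phi z * \<bar>moment_poly n a z\<bar> \<partial>lborel)" for a
      unfolding moment_poly_eq_poly using \<open>0 < c\<close> elim
      by (intro poly_tail_integral_le degree_moment_poly_le) auto
    then show ?case using K unfolding c_def[symmetric] by (rule exists_moment_vanishing)
  qed
qed

end
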